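(* Let $g=2G\,du\,(dv+v\beta_A dx^A)+\mu_{AB}dx^Adx^B$ be a metric in Rácz–Wald coordinates $\{u,v,x^A\}$, where $G$ is a nowhere vanishing function, $\boldsymbol\beta=\beta_Adx^A$ a one-form and $\mu_{AB}$ a Riemannian metric on the codimension-two surfaces $\{u,v=\text{const}\}$, all depending only on $(s=uv,x^A)$. Assume the Killing vector $\eta=u\partial_u-v\partial_v$ is integrable with respect to $g$, i.e. $\boldsymbol\eta\wedge d\boldsymbol\eta=0$ for $\boldsymbol\eta=g(\eta,\cdot)$. Then $\boldsymbol\beta$ is closed, and hence locally exact. *)

theory Defs
  imports "HOL-Analysis.Analysis"
begin

fun Ck_on :: "nat \<Rightarrow> 'a::euclidean_space set \<Rightarrow> ('a \<Rightarrow> 'b::real_normed_vector) \<Rightarrow> bool" where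
  "Ck_on 0 S f = continuous_on S f"
| "Ck_on (Suc k) S f =
     (f differentiable_on S \<and>
      (\<forall>i\<in>Basis. Ck_on k S (\<lambda>x. frechet_derivative f (at x) i)))"

definition smooth_on :: "'a::euclidean_space set \<Rightarrow> ('a \<Rightarrow> 'b::real_normed_vector) \<Rightarrow> bool" where
  "smooth_on S f \<longleftrightarrow> (\<forall>k. Ck_on k S f)"

datatype 'n coord = CU | CV | CX 'n

instance coord :: (finite) finite
proof
  have "(UNIV :: 'a coord set) = {CU, CV} \<union> range CX"
    apply (rule set_eqI)
    apply (case_tac x)
      apply auto
    done
  then show "finite (UNIV :: 'a coord set)" by (metis finite.insertI finite.emptyI finite_UnI finite_imageI finite)
qed

definition cu :: "real^('n::finite coord) \<Rightarrow> real" where "cu p = p $ CU"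
definition cv :: "real^('n::finite coord) \<Rightarrow> real" where "cv p = p $ CV"
definition cx :: "real^('n::finite coord) \<Rightarrow> real^'n" where "cx p = (\<chi> A. p $ CX A)"

definition sx :: "real^('n::finite coord) \<Rightarrow> real \<times> (real^'n)" where
  "sx p = (cu p * cv p, cx p)"

definition partial :: "'m::finite \<Rightarrow> (real^'m \<Rightarrow> real) \<Rightarrow> real^'m \<Rightarrow> real" where
  "partial i f p = frechet_derivative f (at p) (axis i 1)"

definition dform :: "(real^'m::finite \<Rightarrow> 'm \<Rightarrow> real) \<Rightarrow> real^'m \<Rightarrow> 'm \<Rightarrow> 'm \<Rightarrow> real" where
  "dform \<alpha> p i j = partial i (\<lambda>q. \<alpha> q j) p - partial j (\<lambda>q. \<alpha> q i) p"

text \<open>Components (alpha wedge d alpha)_{ijk} (cyclic sum, up to a constant factor).\<close>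
definition wedge_d :: "(real^'m::finite \<Rightarrow> 'm \<Rightarrow> real) \<Rightarrow> real^'m \<Rightarrow> 'm \<Rightarrow> 'm \<Rightarrow> 'm \<Rightarrow> real" where
  "wedge_d \<alpha> p i j k =
     \<alpha> p i * dform \<alpha> p j k + \<alpha> p j * dform \<alpha> p k i + \<alpha> p k * dform \<alpha> p i j"

definition flat :: "(real^'m::finite \<Rightarrow> 'm \<Rightarrow> 'm \<Rightarrow> real) \<Rightarrow> (real^'m \<Rightarrow> 'm \<Rightarrow> real)
                    \<Rightarrow> real^'m \<Rightarrow> 'm \<Rightarrow> real" where
  "flat g X p i = (\<Sum>j\<in>UNIV. g p i j * X p j)"

text \<open>G, beta, mu are functions of (s, x^A). Symmetric products: dx dy = (dx(x)dy + dy(x)dx)/2.\<close>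
definition rw_metric ::
  "(real \<times> (real^'n) \<Rightarrow> real) \<Rightarrow> (real \<times> (real^'n) \<Rightarrow> real^'n) \<Rightarrow> (real \<times> (real^'n) \<Rightarrow> (real^'n^'n))
   \<Rightarrow> real^('n::finite coord) \<Rightarrow> 'n coord \<Rightarrow> 'n coord \<Rightarrow> real" where
  "rw_metric G \<beta> \<mu> p i j =
     (case (i, j) of
        (CU, CV) \<Rightarrow> G (sx p)
      | (CV, CU) \<Rightarrow> G (sx p)
      | (CU, CX A) \<Rightarrow> G (sx p) * cv p * \<beta> (sx p) $ A
      | (CX A, CU) \<Rightarrow> G (sx p) * cv p * \<beta> (sx p) $ A
      | (CX A, CX B) \<Rightarrow> \<mu> (sx p) $ A $ B
      | _ \<Rightarrow> 0)"

definition killing_eta :: "real^('n::finite coord) \<Rightarrow> 'n coord \<Rightarrow> real" where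
  "killing_eta p i = (case i of CU \<Rightarrow> cu p | CV \<Rightarrow> - cv p | CX A \<Rightarrow> 0)"

definition beta_form :: "(real \<times> (real^'n) \<Rightarrow> real^'n) \<Rightarrow> real^('n::finite coord) \<Rightarrow> 'n coord \<Rightarrow> real" where
  "beta_form \<beta> p i = (case i of CX A \<Rightarrow> \<beta> (sx p) $ A | _ \<Rightarrow> 0)"

end

theory Submission
  imports Defs
begin

(* Lowering eta = u d_u - v d_v gives eta^flat = G (- v du + u dv + u v beta_A dx^A). The
   (u, v, x^A) component of eta^flat /\ d eta^flat is -2 G^2 (uv)^2 d_s beta_A, and once
   d_s beta = 0 the (u, x^A, x^B) component is - G^2 u v^2 (d_A beta_B - d_B beta_A).
   Integrability therefore forces d_s beta = 0 and d beta = 0 off the horizon u v = 0, and by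
   continuity everywhere. Local exactness is the Poincare lemma on a ball around each point, with
   the potential f x = integral_0^1 beta(p + t (x - p)) . (x - p) dt. *)

lemma convex_radial_point:
  assumes "convex S" "p \<in> S" "x \<in> S" "t \<in> {0..1}"
  shows "p + t *\<^sub>R (x - p) \<in> S"
proof -
  have "(1 - t) *\<^sub>R p + t *\<^sub>R x \<in> S"
    using assms unfolding convex_alt by auto
  then show ?thesis by (simp add: algebra_simps)
qed

lemma has_integral_radial_derivative:
  fixes F :: "'a::euclidean_space \<Rightarrow> 'a"
  assumes "convex S" "p \<in> S" "q \<in> S"
    and der: "\<And>x. x \<in> S \<Longrightarrow> (F has_derivative F' x) (at x)"
  shows "((\<lambda>t. F (p + t *\<^sub>R (q - p)) \<bullet> h + t * (F' (p + t *\<^sub>R (q - p)) (q - p) \<bullet> h))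
           has_integral F q \<bullet> h) {0..1}"
proof -
  have "((\<lambda>t. t * (F (p + t *\<^sub>R (q - p)) \<bullet> h)) has_vector_derivative
          F (p + t *\<^sub>R (q - p)) \<bullet> h + t * (F' (p + t *\<^sub>R (q - p)) (q - p) \<bullet> h)) (at t within {0..1})"
    if t: "t \<in> {0..1}" for t
  proof -
    let ?x = "p + t *\<^sub>R (q - p)"
    have xS: "?x \<in> S" using convex_radial_point assms t by blast
    have lin: "linear (F' ?x)"
      using der[OF xS] has_derivative_linear by blast
    have "((\<lambda>t. p + t *\<^sub>R (q - p)) has_derivative (\<lambda>s. s *\<^sub>R (q - p))) (at t within {0..1})"
      by (auto intro!: derivative_eq_intros)
    from has_derivative_in_compose[OF this has_derivative_at_withinI[OF der[OF xS]]]
    have "((\<lambda>t. F (p + t *\<^sub>R (q - p))) has_derivative (\<lambda>s. s *\<^sub>R F' ?x (q - p))) (at t within {0..1})"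
      by (simp add: o_def linear_cmul[OF lin])
    then have "((\<lambda>t. t * (F (p + t *\<^sub>R (q - p)) \<bullet> h)) has_derivative
                 (\<lambda>s. s * (F ?x \<bullet> h + t * (F' ?x (q - p) \<bullet> h)))) (at t within {0..1})"
      by (auto intro!: derivative_eq_intros simp: algebra_simps)
    then show ?thesis
      by (simp add: has_vector_derivative_def mult.commute)
  qed
  then have "((\<lambda>t. F (p + t *\<^sub>R (q - p)) \<bullet> h + t * (F' (p + t *\<^sub>R (q - p)) (q - p) \<bullet> h))
           has_integral 1 * (F (p + 1 *\<^sub>R (q - p)) \<bullet> h) - 0 * (F (p + 0 *\<^sub>R (q - p)) \<bullet> h)) {0..1}"
    by (intro fundamental_theorem_of_calculus) auto
  then show ?thesis by simp
qed

lemma has_derivative_radial_integral: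
  fixes F :: "'a::euclidean_space \<Rightarrow> 'a"
  assumes S: "convex S" "open S" "p \<in> S" "q \<in> S"
    and der: "\<And>x. x \<in> S \<Longrightarrow> (F has_derivative F' x) (at x)"
    and cont: "\<And>i. i \<in> Basis \<Longrightarrow> continuous_on S (\<lambda>x. F' x i)"
  shows "((\<lambda>x. integral {0..1} (\<lambda>t. F (p + t *\<^sub>R (x - p)) \<bullet> (x - p))) has_derivative
           (\<lambda>h. integral {0..1}
              (\<lambda>t. (t *\<^sub>R F' (p + t *\<^sub>R (q - p)) h) \<bullet> (q - p) + F (p + t *\<^sub>R (q - p)) \<bullet> h))) (at q)"
proof -
  define \<gamma> where "\<gamma> x t = p + t *\<^sub>R (x - p)" for x and t :: real
  have \<gamma>S: "\<gamma> x t \<in> S" if "x \<in> S" "t \<in> cbox 0 1" for x t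
    using convex_radial_point[OF S(1,3) that(1)] that(2) by (simp add: \<gamma>_def)
  have lin: "bounded_linear (F' x)" if "x \<in> S" for x
    using der[OF that] has_derivative_bounded_linear by blast
  have contF: "continuous_on S F"
    using der by (meson continuous_at_imp_continuous_on has_derivative_continuous)
  define g where "g x t = Blinfun (\<lambda>h. (t *\<^sub>R F' (\<gamma> x t) h) \<bullet> (x - p) + F (\<gamma> x t) \<bullet> h)" for x t
  have g_apply: "blinfun_apply (g x t) = (\<lambda>h. (t *\<^sub>R F' (\<gamma> x t) h) \<bullet> (x - p) + F (\<gamma> x t) \<bullet> h)"
    if "x \<in> S" "t \<in> cbox 0 1" for x t
    unfolding g_def using lin[OF \<gamma>S[OF that]]
    by (intro bounded_linear_Blinfun_apply bounded_linear_intros)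
  have integrand_derivative:
    "((\<lambda>x. F (\<gamma> x t) \<bullet> (x - p)) has_derivative blinfun_apply (g x t)) (at x within S)"
    if "x \<in> S" "t \<in> cbox 0 1" for x t
  proof -
    have "((\<lambda>x. \<gamma> x t) has_derivative (\<lambda>h. t *\<^sub>R h)) (at x within S)"
      unfolding \<gamma>_def by (auto intro!: derivative_eq_intros)
    from has_derivative_in_compose[OF this has_derivative_at_withinI[OF der[OF \<gamma>S[OF that]]]]
    have "((\<lambda>x. F (\<gamma> x t)) has_derivative (\<lambda>h. t *\<^sub>R F' (\<gamma> x t) h)) (at x within S)"
      by (simp add: o_def linear_cmul[OF bounded_linear.linear[OF lin[OF \<gamma>S[OF that]]]])
    then show ?thesis
      unfolding g_apply[OF that]
      by (auto intro!: derivative_eq_intros simp: algebra_simps)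
  qed
  have integrable: "(\<lambda>t. F (\<gamma> x t) \<bullet> (x - p)) integrable_on cbox 0 1" if "x \<in> S" for x
  proof (intro integrable_continuous continuous_intros)
    show "continuous_on (cbox 0 1) (\<lambda>t. F (\<gamma> x t))"
      using \<gamma>S[OF that] unfolding \<gamma>_def
      by (intro continuous_on_compose2[OF contF]) (auto intro!: continuous_intros)
  qed
  have cont_g: "continuous_on (S \<times> cbox 0 1) (\<lambda>(x, t). g x t)"
  proof (rule continuous_on_blinfun_componentwise)
    fix i :: 'a assume i: "i \<in> Basis"
    have cont_\<gamma>: "continuous_on (S \<times> cbox 0 1) (\<lambda>z. \<gamma> (fst z) (snd z))"
      unfolding \<gamma>_def by (intro continuous_intros)
    have im: "(\<lambda>z. \<gamma> (fst z) (snd z)) ` (S \<times> cbox 0 1) \<subseteq> S" using \<gamma>S by auto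
    have "continuous_on (S \<times> cbox 0 1)
            (\<lambda>z. (snd z *\<^sub>R F' (\<gamma> (fst z) (snd z)) i) \<bullet> (fst z - p) + F (\<gamma> (fst z) (snd z)) \<bullet> i)"
      by (intro continuous_intros continuous_on_compose2[OF cont[OF i] cont_\<gamma> im]
            continuous_on_compose2[OF contF cont_\<gamma> im])
    then show "continuous_on (S \<times> cbox 0 1) (\<lambda>z. blinfun_apply (case z of (x, t) \<Rightarrow> g x t) i)"
      by (rule continuous_on_eq) (auto simp: g_apply)
  qed
  have "continuous_on (cbox 0 1) (\<lambda>t. (\<lambda>(x, t). g x t) (q, t))"
    by (rule continuous_on_compose2[OF cont_g]) (auto intro!: continuous_intros S(4))
  then have "g q integrable_on cbox 0 1"
    by (simp add: integrable_continuous_interval)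
  then have "blinfun_apply (integral (cbox 0 1) (g q)) =
               (\<lambda>h. integral {0..1} (\<lambda>t. (t *\<^sub>R F' (\<gamma> q t) h) \<bullet> (q - p) + F (\<gamma> q t) \<bullet> h))"
    by (intro ext) (auto simp: blinfun_apply_integral g_apply[OF S(4)] intro!: integral_cong)
  moreover have "((\<lambda>x. integral (cbox 0 1) (\<lambda>t. F (\<gamma> x t) \<bullet> (x - p))) has_derivative
                   blinfun_apply (integral (cbox 0 1) (g q))) (at q)"
    using leibniz_rule[OF integrand_derivative integrable cont_g S(4,1)] at_within_open[OF S(4,2)]
    by simp
  ultimately show ?thesis
    by (simp add: \<gamma>_def)
qed

lemma poincare_lemma_convex:
  fixes F :: "'a::euclidean_space \<Rightarrow> 'a"
  assumes S: "convex S" "open S" "p \<in> S"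
    and der: "\<And>x. x \<in> S \<Longrightarrow> (F has_derivative F' x) (at x)"
    and sym: "\<And>x h k. x \<in> S \<Longrightarrow> F' x h \<bullet> k = F' x k \<bullet> h"
    and cont: "\<And>i. i \<in> Basis \<Longrightarrow> continuous_on S (\<lambda>x. F' x i)"
  shows "\<exists>f. \<forall>q\<in>S. (f has_derivative (\<lambda>h. F q \<bullet> h)) (at q)"
proof (intro exI ballI)
  fix q assume q: "q \<in> S"
  \<comment> \<open>By symmetry of \<open>F'\<close>, the integrand is the \<open>t\<close>-derivative of \<open>t (F (p + t (q - p)) \<bullet> h)\<close>.\<close>
  have "integral {0..1} (\<lambda>t. (t *\<^sub>R F' (p + t *\<^sub>R (q - p)) h) \<bullet> (q - p) + F (p + t *\<^sub>R (q - p)) \<bullet> h)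
          = integral {0..1} (\<lambda>t. F (p + t *\<^sub>R (q - p)) \<bullet> h + t * (F' (p + t *\<^sub>R (q - p)) (q - p) \<bullet> h))"
    for h
    using sym convex_radial_point[OF S(1,3) q] by (intro integral_cong) auto
  also have "\<dots> h = F q \<bullet> h" for h
    using has_integral_radial_derivative[OF S(1,3) q der] by blast
  finally show "((\<lambda>x. integral {0..1} (\<lambda>t. F (p + t *\<^sub>R (x - p)) \<bullet> (x - p))) has_derivative (\<lambda>h. F q \<bullet> h)) (at q)"
    using has_derivative_radial_integral[OF S q der cont] by simp
qed

lemma has_derivative_imp_partial:
  "(f has_derivative f') (at x) \<Longrightarrow> partial i f x = f' (axis i 1)"
  unfolding partial_def using frechet_derivative_at by metis

lemma frechet_derivative_eq_sum_partial:
  fixes f :: "real^'m::finite \<Rightarrow> real"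
  assumes "f differentiable (at x)"
  shows "frechet_derivative f (at x) h = (\<Sum>i\<in>UNIV. h $ i * partial i f x)"
proof -
  have lin: "linear (frechet_derivative f (at x))"
    using assms frechet_derivative_works has_derivative_linear by blast
  have "frechet_derivative f (at x) h = frechet_derivative f (at x) (\<Sum>i\<in>UNIV. h $ i *\<^sub>R axis i 1)"
    using basis_expansion[of h] by (simp add: scalar_mult_eq_scaleR)
  also have "\<dots> = (\<Sum>i\<in>UNIV. h $ i * partial i f x)"
    by (simp add: linear_sum[OF lin] linear_cmul[OF lin] partial_def)
  finally show ?thesis .
qed

lemma closed_one_form_locally_exact:
  fixes \<alpha> :: "real^'m::finite \<Rightarrow> 'm \<Rightarrow> real"
  assumes "open \<Omega>" "p \<in> \<Omega>"
    and diff: "\<And>x j. x \<in> \<Omega> \<Longrightarrow> (\<lambda>q. \<alpha> q j) differentiable (at x)"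
    and cont: "\<And>i j. continuous_on \<Omega> (\<lambda>x. partial i (\<lambda>q. \<alpha> q j) x)"
    and closed: "\<And>x i j. x \<in> \<Omega> \<Longrightarrow> dform \<alpha> x i j = 0"
  shows "\<exists>W. open W \<and> p \<in> W \<and> W \<subseteq> \<Omega> \<and>
           (\<exists>f. \<forall>q\<in>W. f differentiable (at q) \<and> (\<forall>i. partial i f q = \<alpha> q i))"
proof -
  obtain r where r: "r > 0" "ball p r \<subseteq> \<Omega>"
    using assms(1,2) openE by blast
  define F where "F q = (\<Sum>j\<in>UNIV. \<alpha> q j *\<^sub>R axis j (1::real))" for q
  define F' where "F' x h = (\<Sum>j\<in>UNIV. frechet_derivative (\<lambda>q. \<alpha> q j) (at x) h *\<^sub>R axis j (1::real))"
    for x h :: "real^'m"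
  have F_axis: "F q \<bullet> axis i 1 = \<alpha> q i" for q i
    by (simp add: F_def inner_sum_left inner_axis_axis if_distrib cong: if_cong)
  have der: "(F has_derivative F' x) (at x)" if "x \<in> ball p r" for x
    unfolding F_def F'_def[abs_def]
    using diff r(2) that unfolding frechet_derivative_works
    by (auto intro!: derivative_eq_intros)
  have sym: "F' x h \<bullet> k = F' x k \<bullet> h" if "x \<in> ball p r" for x h k
  proof -
    have x: "x \<in> \<Omega>" using that r(2) by blast
    define P where "P i j = partial i (\<lambda>q. \<alpha> q j) x" for i j
    have expand: "F' x h \<bullet> k = (\<Sum>j\<in>UNIV. \<Sum>i\<in>UNIV. h $ i * k $ j * P i j)" for h k
      by (simp add: F'_def P_def inner_sum_left inner_axis' frechet_derivative_eq_sum_partial[OF diff[OF x]]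
          sum_distrib_left mult_ac)
    have "P i j = P j i" for i j
      using closed[OF x, of i j] by (simp add: dform_def P_def)
    then show ?thesis
      unfolding expand by (subst sum.swap) (simp add: mult_ac)
  qed
  have cont': "continuous_on (ball p r) (\<lambda>x. F' x i)" if i: "i \<in> Basis" for i
  proof -
    obtain c where c: "i = axis c 1" using i by (auto simp: Basis_vec_def)
    have "continuous_on (ball p r) (\<lambda>x. \<Sum>j\<in>UNIV. partial c (\<lambda>q. \<alpha> q j) x *\<^sub>R axis j (1::real))"
      using continuous_on_subset[OF cont r(2)] by (intro continuous_intros)
    then show ?thesis by (simp add: F'_def c partial_def)
  qed
  obtain f where f: "\<And>q. q \<in> ball p r \<Longrightarrow> (f has_derivative (\<lambda>h. F q \<bullet> h)) (at q)"
    using poincare_lemma_convex[OF convex_ball open_ball centre_in_ball[THEN iffD2, OF r(1)] der sym cont'] by blast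
  show ?thesis
  proof (intro exI conjI ballI allI)
    fix q i assume q: "q \<in> ball p r"
    show "f differentiable (at q)" using f[OF q] by (auto simp: differentiable_def)
    show "partial i f q = \<alpha> q i"
      using has_derivative_imp_partial[OF f[OF q]] F_axis by simp
  qed (use r in auto)
qed

lemma sum_UNIV_coord:
  fixes f :: "'n::finite coord \<Rightarrow> 'b::comm_monoid_add"
  shows "(\<Sum>i\<in>UNIV. f i) = f CU + f CV + (\<Sum>A\<in>UNIV. f (CX A))"
proof -
  have U: "(UNIV :: 'n coord set) = insert CU (insert CV (range CX))"
    by (metis UNIV_eq_I coord.exhaust insert_iff rangeI)
  have "(\<Sum>i\<in>UNIV. f i) = f CU + (f CV + sum f (range CX))"
    unfolding U by (subst sum.insert, auto)+
  also have "sum f (range CX) = (\<Sum>A\<in>UNIV. f (CX A))"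
    by (subst sum.reindex) (auto simp: inj_def)
  finally show ?thesis by (simp add: add.assoc)
qed

lemma flat_killing_eta_CU: "flat (rw_metric G \<beta> \<mu>) killing_eta q CU = - (G (sx q) * cv q)"
  and flat_killing_eta_CV: "flat (rw_metric G \<beta> \<mu>) killing_eta q CV = G (sx q) * cu q"
  and flat_killing_eta_CX:
    "flat (rw_metric G \<beta> \<mu>) killing_eta q (CX A) = G (sx q) * cv q * \<beta> (sx q) $ A * cu q"
  by (simp_all add: flat_def sum_UNIV_coord rw_metric_def killing_eta_def)

definition dsx :: "real^('n::finite coord) \<Rightarrow> real^('n coord) \<Rightarrow> real \<times> (real^'n)" where
  "dsx q h = (cu q * cv h + cu h * cv q, cx h)"

lemma bounded_linear_cu: "bounded_linear cu"
  unfolding cu_def by (rule bounded_linear_vec_nth)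

lemma bounded_linear_cv: "bounded_linear cv"
  unfolding cv_def by (rule bounded_linear_vec_nth)

lemma bounded_linear_cx: "bounded_linear (cx :: real^('n::finite coord) \<Rightarrow> real^'n)"
proof -
  have "linear (cx :: real^('n coord) \<Rightarrow> real^'n)"
    by (rule linearI) (auto simp: cx_def vec_eq_iff)
  then show ?thesis by (simp add: linear_conv_bounded_linear)
qed

lemma has_derivative_cu: "(cu has_derivative cu) (at q)"
  and has_derivative_cv: "(cv has_derivative cv) (at q)"
  by (simp_all add: bounded_linear_imp_has_derivative bounded_linear_cu bounded_linear_cv)

lemma has_derivative_sx: "(sx has_derivative dsx q) (at q)"
  unfolding sx_def[abs_def] dsx_def[abs_def]
  by (intro has_derivative_Pair has_derivative_mult bounded_linear.has_derivative[OF bounded_linear_cu]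
      bounded_linear.has_derivative[OF bounded_linear_cv] bounded_linear.has_derivative[OF bounded_linear_cx]
      has_derivative_ident)

lemma has_derivative_comp_sx:
  assumes "\<phi> differentiable at (sx q)"
  shows "((\<lambda>q. \<phi> (sx q)) has_derivative (\<lambda>h. frechet_derivative \<phi> (at (sx q)) (dsx q h))) (at q)"
  using diff_chain_at[OF has_derivative_sx assms[unfolded frechet_derivative_works]] by (simp add: o_def)

lemma continuous_on_dsx: "continuous_on T (\<lambda>q. dsx q h)"
  unfolding dsx_def cu_def cv_def by (intro continuous_intros)

lemma dsx_axis:
  "dsx q (axis CU 1) = (cv q, 0)" "dsx q (axis CV 1) = (cu q, 0)" "dsx q (axis (CX A) 1) = (0, axis A 1)"
  by (auto simp: dsx_def cu_def cv_def cx_def axis_def vec_eq_iff)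

lemma linear_Pair_zero: "linear L \<Longrightarrow> L (c, 0) = c *\<^sub>R L (1, 0)"
  using linear_cmul[of L c "(1, 0)"] by simp

lemma continuous_on_frechet_derivative_comp:
  fixes \<phi> :: "'a::euclidean_space \<Rightarrow> 'b::real_normed_vector"
  assumes "open D" "Ck_on 1 D \<phi>" "continuous_on T g" "g ` T \<subseteq> D" "continuous_on T v"
  shows "continuous_on T (\<lambda>t. frechet_derivative \<phi> (at (g t)) (v t))"
proof -
  have diff: "\<phi> differentiable at y" if "y \<in> D" for y
    using assms(1,2) that by (auto simp: differentiable_on_eq_differentiable_at)
  have cont: "continuous_on D (\<lambda>y. frechet_derivative \<phi> (at y) b)" if "b \<in> Basis" for b
    using assms(2) that by simp
  have repr: "frechet_derivative \<phi> (at (g t)) (v t) = (\<Sum>b\<in>Basis. (v t \<bullet> b) *\<^sub>R frechet_derivative \<phi> (at (g t)) b)"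
    if "t \<in> T" for t
  proof -
    have "linear (frechet_derivative \<phi> (at (g t)))"
      using diff[of "g t"] assms(4) that frechet_derivative_works has_derivative_linear by blast
    then show ?thesis
      by (subst (1) euclidean_representation[symmetric]) (simp add: linear_sum linear_cmul)
  qed
  have "continuous_on T (\<lambda>t. \<Sum>b\<in>Basis. (v t \<bullet> b) *\<^sub>R frechet_derivative \<phi> (at (g t)) b)"
    using assms(3-5) by (intro continuous_intros continuous_on_compose2[OF cont]) auto
  then show ?thesis
    by (rule continuous_on_eq) (simp add: repr)
qed

lemma cu_cv_axis [simp]:
  "cu (axis CU 1 :: real^('n::finite coord)) = 1" "cv (axis CU 1 :: real^('n::finite coord)) = 0"
  "cu (axis CV 1 :: real^('n::finite coord)) = 0" "cv (axis CV 1 :: real^('n::finite coord)) = 1"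
  "cu (axis (CX A) 1 :: real^('n::finite coord)) = 0" "cv (axis (CX A) 1 :: real^('n::finite coord)) = 0"
  by (auto simp: cu_def cv_def axis_def)

locale rw_point =
  fixes G :: "real \<times> (real^'n::finite) \<Rightarrow> real" and \<beta> :: "real \<times> (real^'n) \<Rightarrow> real^'n"
    and \<mu> :: "real \<times> (real^'n) \<Rightarrow> real^'n^'n" and q :: "real^('n coord)"
  assumes G_differentiable: "G differentiable at (sx q)"
    and \<beta>_differentiable: "\<beta> differentiable at (sx q)"
begin

text \<open>\<open>DG (1, 0)\<close> and \<open>D\<beta> (1, 0)\<close> are the \<open>s\<close>-derivatives at \<open>sx q\<close>, and
  \<open>D\<beta> (0, axis A 1)\<close> is the \<open>x\<^sup>A\<close>-derivative.\<close>

definition "DG = frechet_derivative G (at (sx q))"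
definition "D\<beta> = frechet_derivative \<beta> (at (sx q))"

abbreviation "\<eta> \<equiv> flat (rw_metric G \<beta> \<mu>) killing_eta"

lemma linear_DG: "linear DG"
  unfolding DG_def using G_differentiable frechet_derivative_works has_derivative_linear by blast

lemma linear_D\<beta>: "linear D\<beta>"
  unfolding D\<beta>_def using \<beta>_differentiable frechet_derivative_works has_derivative_linear by blast

lemma DG_dsx_axis:
  "DG (dsx q (axis CU 1)) = cv q * DG (1, 0)" "DG (dsx q (axis CV 1)) = cu q * DG (1, 0)"
  "DG (dsx q (axis (CX A) 1)) = DG (0, axis A 1)"
  by (simp_all add: dsx_axis linear_Pair_zero[OF linear_DG, of "cv q"] linear_Pair_zero[OF linear_DG, of "cu q"])

lemma D\<beta>_dsx_axis:
  "D\<beta> (dsx q (axis CU 1)) = cv q *\<^sub>R D\<beta> (1, 0)" "D\<beta> (dsx q (axis CV 1)) = cu q *\<^sub>R D\<beta> (1, 0)"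
  "D\<beta> (dsx q (axis (CX A) 1)) = D\<beta> (0, axis A 1)"
  by (simp_all add: dsx_axis linear_Pair_zero[OF linear_D\<beta>, of "cv q"] linear_Pair_zero[OF linear_D\<beta>, of "cu q"])

lemma has_derivative_G_sx: "((\<lambda>q. G (sx q)) has_derivative (\<lambda>h. DG (dsx q h))) (at q)"
  unfolding DG_def by (rule has_derivative_comp_sx[OF G_differentiable])

lemma has_derivative_\<beta>_sx: "((\<lambda>q. \<beta> (sx q) $ A) has_derivative (\<lambda>h. D\<beta> (dsx q h) $ A)) (at q)"
  unfolding D\<beta>_def
  by (rule bounded_linear.has_derivative[OF bounded_linear_vec_nth has_derivative_comp_sx[OF \<beta>_differentiable]])

lemma partial_\<beta>_sx: "partial i (\<lambda>q. \<beta> (sx q) $ A) q = D\<beta> (dsx q (axis i 1)) $ A"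
  by (rule has_derivative_imp_partial[OF has_derivative_\<beta>_sx])

lemma partial_\<eta>_CU: "partial i (\<lambda>q. \<eta> q CU) q = - (DG (dsx q (axis i 1)) * cv q + G (sx q) * cv (axis i 1))"
  unfolding flat_killing_eta_CU
  by (rule has_derivative_imp_partial)
     (auto intro!: derivative_eq_intros has_derivative_G_sx has_derivative_cv)

lemma partial_\<eta>_CV: "partial i (\<lambda>q. \<eta> q CV) q = DG (dsx q (axis i 1)) * cu q + G (sx q) * cu (axis i 1)"
  unfolding flat_killing_eta_CV
  by (rule has_derivative_imp_partial)
     (auto intro!: derivative_eq_intros has_derivative_G_sx has_derivative_cu)

lemma partial_\<eta>_CX: "partial i (\<lambda>q. \<eta> q (CX A)) q =
    DG (dsx q (axis i 1)) * cv q * \<beta> (sx q) $ A * cu q + G (sx q) * cv (axis i 1) * \<beta> (sx q) $ A * cu q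
    + G (sx q) * cv q * D\<beta> (dsx q (axis i 1)) $ A * cu q + G (sx q) * cv q * \<beta> (sx q) $ A * cu (axis i 1)"
  unfolding flat_killing_eta_CX
  by (rule has_derivative_imp_partial)
     (auto intro!: derivative_eq_intros has_derivative_G_sx has_derivative_\<beta>_sx has_derivative_cu
       has_derivative_cv simp: algebra_simps)

lemma wedge_\<eta>_CU_CV_CX:
  "wedge_d \<eta> q CU CV (CX A) = -2 * (G (sx q))\<^sup>2 * (cu q * cv q)\<^sup>2 * D\<beta> (1, 0) $ A"
  unfolding wedge_d_def dform_def partial_\<eta>_CU partial_\<eta>_CV partial_\<eta>_CX
  by (simp add: DG_dsx_axis D\<beta>_dsx_axis flat_killing_eta_CU flat_killing_eta_CV flat_killing_eta_CX
      algebra_simps power2_eq_square)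

lemma wedge_\<eta>_CU_CX_CX:
  "wedge_d \<eta> q CU (CX A) (CX B) =
     - (G (sx q))\<^sup>2 * cu q * (cv q)\<^sup>2 * (D\<beta> (0, axis A 1) $ B - D\<beta> (0, axis B 1) $ A)
     + (G (sx q))\<^sup>2 * (cu q)\<^sup>2 * cv q ^ 3 * (\<beta> (sx q) $ B * D\<beta> (1, 0) $ A - \<beta> (sx q) $ A * D\<beta> (1, 0) $ B)"
  unfolding wedge_d_def dform_def partial_\<eta>_CU partial_\<eta>_CX
  by (simp add: DG_dsx_axis D\<beta>_dsx_axis flat_killing_eta_CU flat_killing_eta_CX
      algebra_simps power2_eq_square power3_eq_cube)

end

lemma zero_on_horizon_by_continuity:
  fixes h :: "real^('n::finite coord) \<Rightarrow> real"
  assumes "open \<Omega>" "p \<in> \<Omega>" "continuous_on \<Omega> h"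
    and "\<And>q. q \<in> \<Omega> \<Longrightarrow> cu q \<noteq> 0 \<Longrightarrow> cv q \<noteq> 0 \<Longrightarrow> h q = 0"
  shows "h p = 0"
proof -
  \<comment> \<open>Along \<open>p + t (\<partial>\<^sub>u + \<partial>\<^sub>v)\<close> both \<open>u\<close> and \<open>v\<close> are nonzero for all small \<open>t \<noteq> 0\<close>.\<close>
  define c where "c t = p + t *\<^sub>R (axis CU 1 + axis CV 1)" for t :: real
  have "(c \<longlongrightarrow> c 0) (at 0)"
    unfolding c_def by (intro tendsto_intros)
  then have c_tendsto: "(c \<longlongrightarrow> p) (at 0)"
    by (simp add: c_def)
  have "((\<lambda>t. h (c t)) \<longlongrightarrow> h p) (at 0)"
    using assms(1-3) c_tendsto
    by (metis continuous_on_eq_continuous_at isCont_tendsto_compose)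
  moreover have "eventually (\<lambda>t. h (c t) = 0) (at 0)"
    using topological_tendstoD[OF c_tendsto assms(1,2)]
      eventually_neq_at_within[of "- cu p"] eventually_neq_at_within[of "- cv p"]
  proof eventually_elim
    case (elim t)
    have "cu (c t) = cu p + t" "cv (c t) = cv p + t"
      by (auto simp: c_def cu_def cv_def axis_def)
    then show ?case using assms(4)[OF elim(1)] elim by auto
  qed
  ultimately have "((\<lambda>t. 0) \<longlongrightarrow> h p) (at (0::real))"
    by (rule Lim_transform_eventually)
  then show ?thesis
    by (metis tendsto_const tendsto_unique trivial_limit_at)
qed

locale rw_integrable =
  fixes G :: "real \<times> (real^'n::finite) \<Rightarrow> real" and \<beta> :: "real \<times> (real^'n) \<Rightarrow> real^'n"
    and \<mu> :: "real \<times> (real^'n) \<Rightarrow> real^'n^'n"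
    and D :: "(real \<times> (real^'n)) set" and \<Omega> :: "(real^('n coord)) set"
  assumes open_D: "open D" and open_\<Omega>: "open \<Omega>" and sx_in_D: "\<And>p. p \<in> \<Omega> \<Longrightarrow> sx p \<in> D"
    and G_differentiable: "G differentiable_on D" and \<beta>_C1: "Ck_on 1 D \<beta>"
    and G_nonzero: "\<And>y. y \<in> D \<Longrightarrow> G y \<noteq> 0"
    and integrable: "\<And>p i j k. p \<in> \<Omega> \<Longrightarrow> wedge_d (flat (rw_metric G \<beta> \<mu>) killing_eta) p i j k = 0"
begin

lemma rw_pointI: "p \<in> \<Omega> \<Longrightarrow> rw_point G \<beta> p"
  using G_differentiable \<beta>_C1 open_D sx_in_D
  by unfold_locales (auto simp: differentiable_on_eq_differentiable_at)

lemma continuous_on_derivative_\<beta>_sx: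
  "continuous_on \<Omega> v \<Longrightarrow> continuous_on \<Omega> (\<lambda>q. frechet_derivative \<beta> (at (sx q)) (v q))"
  using sx_in_D has_derivative_sx
  by (intro continuous_on_frechet_derivative_comp[OF open_D \<beta>_C1])
     (auto intro: has_derivative_continuous continuous_at_imp_continuous_on)

lemma derivative_\<beta>_s_zero:
  assumes "p \<in> \<Omega>"
  shows "frechet_derivative \<beta> (at (sx p)) (1, 0) = 0"
proof -
  have off_horizon: "frechet_derivative \<beta> (at (sx q)) (1, 0) $ A = 0" if "q \<in> \<Omega>" "cu q \<noteq> 0" "cv q \<noteq> 0" for q A
  proof -
    interpret rw_point G \<beta> \<mu> q by (rule rw_pointI[OF that(1)])
    have "-2 * (G (sx q))\<^sup>2 * (cu q * cv q)\<^sup>2 * D\<beta> (1, 0) $ A = 0"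
      using integrable[OF that(1)] wedge_\<eta>_CU_CV_CX by metis
    then show ?thesis
      using that G_nonzero sx_in_D by (simp add: D\<beta>_def)
  qed
  have cont: "continuous_on \<Omega> (\<lambda>q. frechet_derivative \<beta> (at (sx q)) (1, 0) $ A)" for A
    by (intro continuous_intros continuous_on_derivative_\<beta>_sx)
  show ?thesis
    using zero_on_horizon_by_continuity[OF open_\<Omega> assms cont off_horizon] by (simp add: vec_eq_iff)
qed

lemma derivative_\<beta>_x_symmetric:
  assumes "p \<in> \<Omega>"
  shows "frechet_derivative \<beta> (at (sx p)) (0, axis A 1) $ B = frechet_derivative \<beta> (at (sx p)) (0, axis B 1) $ A"
proof -
  have off_horizon:
    "frechet_derivative \<beta> (at (sx q)) (0, axis A 1) $ B - frechet_derivative \<beta> (at (sx q)) (0, axis B 1) $ A = 0"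
    if "q \<in> \<Omega>" "cu q \<noteq> 0" "cv q \<noteq> 0" for q
  proof -
    interpret rw_point G \<beta> \<mu> q by (rule rw_pointI[OF that(1)])
    have "- (G (sx q))\<^sup>2 * cu q * (cv q)\<^sup>2 * (D\<beta> (0, axis A 1) $ B - D\<beta> (0, axis B 1) $ A) = 0"
      using integrable[OF that(1)] wedge_\<eta>_CU_CX_CX derivative_\<beta>_s_zero[OF that(1)]
      by (simp add: D\<beta>_def)
    then show ?thesis
      using that G_nonzero sx_in_D by (simp add: D\<beta>_def)
  qed
  have cont: "continuous_on \<Omega> (\<lambda>q. frechet_derivative \<beta> (at (sx q)) (0, axis A 1) $ B
                    - frechet_derivative \<beta> (at (sx q)) (0, axis B 1) $ A)"
    by (intro continuous_intros continuous_on_derivative_\<beta>_sx)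
  show ?thesis
    using zero_on_horizon_by_continuity[OF open_\<Omega> assms cont off_horizon] by simp
qed

lemma partial_beta_form:
  assumes "p \<in> \<Omega>"
  shows "partial i (\<lambda>q. beta_form \<beta> q j) p =
           (case j of CX A \<Rightarrow> frechet_derivative \<beta> (at (sx p)) (dsx p (axis i 1)) $ A | _ \<Rightarrow> 0)"
proof (cases j)
  case (CX A)
  interpret rw_point G \<beta> \<mu> p by (rule rw_pointI[OF assms])
  show ?thesis using partial_\<beta>_sx by (simp add: beta_form_def CX D\<beta>_def)
qed (simp_all add: beta_form_def has_derivative_imp_partial[OF has_derivative_const])

lemma beta_form_closed:
  assumes "p \<in> \<Omega>"
  shows "dform (beta_form \<beta>) p i j = 0"
proof -
  interpret rw_point G \<beta> \<mu> p by (rule rw_pointI[OF assms])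
  have partial: "partial i (\<lambda>q. beta_form \<beta> q j) p = (case j of CX A \<Rightarrow> D\<beta> (dsx p (axis i 1)) $ A | _ \<Rightarrow> 0)"
    for i j using partial_beta_form[OF assms] by (cases j) (simp_all add: D\<beta>_def)
  have "D\<beta> (1, 0) = 0"
    using derivative_\<beta>_s_zero[OF assms] by (simp add: D\<beta>_def)
  moreover have "D\<beta> (0, axis A 1) $ B = D\<beta> (0, axis B 1) $ A" for A B
    using derivative_\<beta>_x_symmetric[OF assms] by (simp add: D\<beta>_def)
  ultimately show ?thesis
    by (cases i; cases j) (simp_all add: dform_def partial D\<beta>_dsx_axis)
qed

lemma beta_form_locally_exact:
  assumes "p \<in> \<Omega>"
  shows "\<exists>W. open W \<and> p \<in> W \<and> W \<subseteq> \<Omega> \<and>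
           (\<exists>f. \<forall>q\<in>W. f differentiable (at q) \<and> (\<forall>i. partial i f q = beta_form \<beta> q i))"
proof (rule closed_one_form_locally_exact[OF open_\<Omega> assms _ _ beta_form_closed])
  show "(\<lambda>q. beta_form \<beta> q j) differentiable (at x)" if "x \<in> \<Omega>" for x j
  proof (cases j)
    case (CX A)
    interpret rw_point G \<beta> \<mu> x by (rule rw_pointI[OF that])
    show ?thesis using has_derivative_\<beta>_sx by (auto simp: beta_form_def CX differentiable_def)
  qed (simp_all add: beta_form_def)
  show "continuous_on \<Omega> (\<lambda>x. partial i (\<lambda>q. beta_form \<beta> q j) x)" for i j
  proof (rule continuous_on_eq[OF _ partial_beta_form[symmetric]])
    show "continuous_on \<Omega> (\<lambda>x. case j of CX A \<Rightarrow> frechet_derivative \<beta> (at (sx x)) (dsx x (axis i 1)) $ A | _ \<Rightarrow> 0)"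
      by (cases j) (auto intro!: continuous_intros continuous_on_derivative_\<beta>_sx continuous_on_dsx)
  qed
qed

end

theorem mainTheorem5:
  fixes G :: "real \<times> (real^'n::finite) \<Rightarrow> real"
    and \<beta> :: "real \<times> (real^'n) \<Rightarrow> real^'n"
    and \<mu> :: "real \<times> (real^'n) \<Rightarrow> (real^'n^'n)"
    and D :: "(real \<times> (real^'n)) set"
    and \<Omega> :: "(real^('n coord)) set"
  assumes "open D" and "open \<Omega>"
    and "\<forall>p\<in>\<Omega>. sx p \<in> D"
    and "smooth_on D G" and "smooth_on D \<beta>" and "smooth_on D \<mu>"
    and "\<forall>y\<in>D. G y \<noteq> 0"
    and "\<forall>y\<in>D. \<forall>A B. \<mu> y $ A $ B = \<mu> y $ B $ A"
    and "\<forall>y\<in>D. \<forall>w::real^'n. w \<noteq> 0 \<longrightarrow> (\<Sum>A\<in>UNIV. \<Sum>B\<in>UNIV. \<mu> y $ A $ B * w $ A * w $ B) > 0"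
    and "\<forall>p\<in>\<Omega>. \<forall>i j k. wedge_d (flat (rw_metric G \<beta> \<mu>) killing_eta) p i j k = 0"
  shows "(\<forall>p\<in>\<Omega>. \<forall>i j. dform (beta_form \<beta>) p i j = 0)
       \<and> (\<forall>p\<in>\<Omega>. \<exists>W. open W \<and> p \<in> W \<and> W \<subseteq> \<Omega> \<and>
             (\<exists>f. \<forall>q\<in>W. f differentiable (at q) \<and> (\<forall>i. partial i f q = beta_form \<beta> q i)))"
proof -
  interpret rw_integrable G \<beta> \<mu> D \<Omega>
  proof
    have "Ck_on 1 D G" "Ck_on 1 D \<beta>"
      using assms(4,5) by (simp_all add: smooth_on_def)
    then show "G differentiable_on D" "Ck_on 1 D \<beta>"
      by simp_all
  qed (use assms in auto)
  show ?thesis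
    using beta_form_closed beta_form_locally_exact by blast
qed

end
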